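(* Let $p$ be a prior probability density on $\mathcal{X}$, $L:\mathcal{X}\to[0,\infty)$ a likelihood, $Z(u) = \int_{\{x: L(x)>u\}} p(x)\,dx$, $w:[0,\infty)\to[0,\infty)$ a weight function and $W(u) = \int_0^u w(s)\,ds$. Consider the weighted slice sampler Markov chain $(X_n, U_n)$: given $X_n$, draw $U_{n+1}$ from the density $w(u)\,\mathbb{I}\{0\le u\le L(X_n)\}/W(L(X_n))$; then draw $X_{n+1}$ from the prior $p$ restricted to $\{x: L(x) > U_{n+1}\}$, i.e. with density $p(x)\,\mathbb{I}\{L(x) > U_{n+1}\}/Z(U_{n+1})$. Then for likelihood ordinates $y, z$ (with $W(y)>0$), $$\mathbb{P}\{L(X_{n+1}) \le z \mid L(X_n) = y\} = \int_0^{y\wedge z} \left\{1 - \frac{Z(z)}{Z(u)}\right\} \frac{w(u)}{W(y)}\, du.$$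
   Context: $y\wedge z = \min\{y,z\}$. This chain alternates between the conditionals of the weighted joint distribution $\pi_w(x,u) \propto w(u)\,\mathbb{I}\{0<u<L(x)\}\,p(x)$. *)

theory Defs
  imports "HOL-Analysis.Analysis"
begin

definition Zmass :: "'a measure \<Rightarrow> ('a \<Rightarrow> real) \<Rightarrow> ('a \<Rightarrow> real) \<Rightarrow> real \<Rightarrow> real" where
  "Zmass M p L u = (LINT x:{x\<in>space M. L x > u}|M. p x)"

definition Wcum :: "(real \<Rightarrow> real) \<Rightarrow> real \<Rightarrow> real" where
  "Wcum w u = (LINT s:{0..u}|lborel. w s)"

definition slice_kernel ::
  "'a measure \<Rightarrow> ('a \<Rightarrow> real) \<Rightarrow> ('a \<Rightarrow> real) \<Rightarrow> (real \<Rightarrow> real) \<Rightarrow> 'a \<Rightarrow> 'a set \<Rightarrow> real" where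
  "slice_kernel M p L w x A =
     (LINT u:{0..L x}|lborel. (w u / Wcum w (L x)) *
        (LINT x':{x'\<in>space M. L x' > u}|M. p x' * indicator A x' / Zmass M p L u))"

end

theory Submission
  imports Defs
begin

text \<open>Conditionally on U = u the next state is distributed as the prior restricted to
  {L > u}, so it lands in {L \<le> z} with probability (Z(u) - Z(z)) / Z(u) if u < z
  and with probability 0 otherwise. Integrating this against the law
  w(u) / W(y) du of U on [0, y] gives the formula; the integrands agree on [0, y)
  because Z > 0 there, and the endpoint y is a null set.\<close>

context
  fixes M :: "'a measure" and p L :: "'a \<Rightarrow> real"
  assumes p_int: "integrable M p"
    and L_meas: "L \<in> borel_measurable M"
begin

lemma Zmass_diff:
  assumes "u \<le> v"
  shows "Zmass M p L u - Zmass M p L v = (LINT x:{x\<in>space M. u < L x \<and> L x \<le> v}|M. p x)"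
proof -
  have sets: "{x\<in>space M. c < L x} \<in> sets M" for c
    using L_meas by measurable
  have "Zmass M p L u - Zmass M p L v
      = (LINT x|M. (indicator {x\<in>space M. u < L x} x - indicator {x\<in>space M. v < L x} x) * p x)"
    unfolding Zmass_def set_lebesgue_integral_def
    using integrable_mult_indicator[OF sets p_int]
    by (simp add: left_diff_distrib)
  also have "\<dots> = (LINT x:{x\<in>space M. u < L x \<and> L x \<le> v}|M. p x)"
    unfolding set_lebesgue_integral_def
    by (rule Bochner_Integration.integral_cong) (use assms in \<open>auto simp: indicator_def\<close>)
  finally show ?thesis .
qed

lemma Zmass_antimono:
  assumes p_nonneg: "\<And>x. x \<in> space M \<Longrightarrow> p x \<ge> 0" and "u \<le> v"
  shows "Zmass M p L v \<le> Zmass M p L u"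
proof -
  have "0 \<le> (LINT x:{x\<in>space M. u < L x \<and> L x \<le> v}|M. p x)"
    unfolding set_lebesgue_integral_def
    by (rule Bochner_Integration.integral_nonneg) (auto simp: p_nonneg indicator_def)
  then show ?thesis
    using Zmass_diff[OF \<open>u \<le> v\<close>] by simp
qed

lemma borel_measurable_Zmass:
  assumes "\<And>x. x \<in> space M \<Longrightarrow> p x \<ge> 0"
  shows "Zmass M p L \<in> borel_measurable borel"
proof -
  have "mono (\<lambda>u. - Zmass M p L u)"
    using Zmass_antimono[OF assms] by (auto simp: mono_def)
  then have "(\<lambda>u. - (- Zmass M p L u)) \<in> borel_measurable borel"
    using borel_measurable_mono by measurable
  then show ?thesis
    by simp
qed

text \<open>No positivity of Z(u) is needed: when Z(u) = 0 both sides are 0, by x / 0 = 0.\<close>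
lemma restricted_prior_sublevel_prob:
  "(LINT x':{x'\<in>space M. L x' > u}|M. p x' * indicator {x'\<in>space M. L x' \<le> z} x' / Zmass M p L u)
    = (if u < z then (Zmass M p L u - Zmass M p L z) / Zmass M p L u else 0)"
proof -
  have "(LINT x':{x'\<in>space M. L x' > u}|M. p x' * indicator {x'\<in>space M. L x' \<le> z} x' / Zmass M p L u)
      = (LINT x':{x'\<in>space M. u < L x' \<and> L x' \<le> z}|M. p x') / Zmass M p L u"
    unfolding set_lebesgue_integral_def
    by (auto simp: indicator_def intro!: Bochner_Integration.integral_cong)
  also have "\<dots> = (if u < z then (Zmass M p L u - Zmass M p L z) / Zmass M p L u else 0)"
  proof (cases "u < z")
    case False
    then have empty: "{x'\<in>space M. u < L x' \<and> L x' \<le> z} = {}"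
      by auto
    show ?thesis
      using False by (simp add: empty set_lebesgue_integral_def)
  qed (simp add: Zmass_diff)
  finally show ?thesis .
qed

end

theorem lemma4:
  fixes M :: "'a measure" and p L :: "'a \<Rightarrow> real" and w :: "real \<Rightarrow> real"
    and x :: 'a and y z :: real
  assumes p_meas: "p \<in> borel_measurable M"
    and p_nonneg: "\<And>x. x \<in> space M \<Longrightarrow> p x \<ge> 0"
    and p_int: "integrable M p"
    and p_prob: "(LINT x|M. p x) = 1"
    and L_meas: "L \<in> borel_measurable M"
    and L_nonneg: "\<And>x. x \<in> space M \<Longrightarrow> L x \<ge> 0"
    and w_meas: "w \<in> borel_measurable borel"
    and w_nonneg: "\<And>s. s \<ge> 0 \<Longrightarrow> w s \<ge> 0"
    and w_int: "set_integrable lborel {0..y} w"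
    and W_pos: "Wcum w y > 0"
    and Z_pos: "\<And>u. 0 \<le> u \<Longrightarrow> u < y \<Longrightarrow> Zmass M p L u > 0"
    and x_in: "x \<in> space M"
    and Lx: "L x = y"
  shows "slice_kernel M p L w x {x'\<in>space M. L x' \<le> z}
         = (LINT u:{0..min y z}|lborel. (1 - Zmass M p L z / Zmass M p L u) * (w u / Wcum w y))"
proof -
  let ?Z = "Zmass M p L" and ?W = "Wcum w y"
  note borel_measurable_Zmass[OF p_int L_meas p_nonneg, measurable] w_meas[measurable]
  have integrands_meas:
    "(\<lambda>u. w u / ?W * (if u < z then (?Z u - ?Z z) / ?Z u else 0)) \<in> borel_measurable lborel"
    "(\<lambda>u. indicator {..z} u * ((1 - ?Z z / ?Z u) * (w u / ?W))) \<in> borel_measurable lborel"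
    by measurable
  have "slice_kernel M p L w x {x'\<in>space M. L x' \<le> z}
      = (LINT u:{0..y}|lborel. w u / ?W * (if u < z then (?Z u - ?Z z) / ?Z u else 0))"
    unfolding slice_kernel_def Lx restricted_prior_sublevel_prob[OF p_int L_meas] ..
  also have "\<dots> = (LINT u:{0..y}|lborel. indicator {..z} u * ((1 - ?Z z / ?Z u) * (w u / ?W)))"
  proof (rule set_lebesgue_integral_cong_AE)
    show "AE u\<in>{0..y} in lborel. w u / ?W * (if u < z then (?Z u - ?Z z) / ?Z u else 0)
        = indicator {..z} u * ((1 - ?Z z / ?Z u) * (w u / ?W))"
      using AE_lborel_singleton[of y]
    proof eventually_elim
      case (elim u)
      show ?case
      proof
        assume "u \<in> {0..y}"
        with elim have "?Z u > 0"
          using Z_pos by auto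
        then show "w u / ?W * (if u < z then (?Z u - ?Z z) / ?Z u else 0)
            = indicator {..z} u * ((1 - ?Z z / ?Z u) * (w u / ?W))"
          by (cases u z rule: linorder_cases) (simp_all add: indicator_def diff_divide_distrib)
      qed
    qed
  qed (simp_all add: integrands_meas)
  also have "\<dots> = (LINT u:{0..min y z}|lborel. (1 - ?Z z / ?Z u) * (w u / ?W))"
    unfolding set_lebesgue_integral_def
    by (rule Bochner_Integration.integral_cong) (auto simp: indicator_def)
  finally show ?thesis .
qed

end
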